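(* Let $p:\mathbb{R}^n\to\mathbb{R}^m$ be a polynomial map with components of degree at most $d$. Then for all $r>0$, $$\sup_{x\in B_{\mathbb{R}^n}(r)}\|p(x)\|\le\alpha(d,m)\,n^d(1+r)^d\sup_{x\in B_{\mathbb{R}^n}(1)}\|p(x)\|,$$ where $\alpha(d,m)=m^{d/2}d^{2d}(d+1)$.
   Context: $B_{\mathbb{R}^n}(r)$ is the closed Euclidean ball of radius $r$ centered at $0$; $\|\cdot\|$ is the Euclidean norm. *)

theory Defs
  imports "HOL-Analysis.Analysis"
begin

definition poly_fun_deg :: "nat \<Rightarrow> (real^'n \<Rightarrow> real) \<Rightarrow> bool" where
  "poly_fun_deg d f \<longleftrightarrow>
     (\<exists>c :: ('n \<Rightarrow> nat) \<Rightarrow> real.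
        \<forall>x. f x = (\<Sum>\<alpha>\<in>{\<alpha>. sum \<alpha> UNIV \<le> d}. c \<alpha> * (\<Prod>i\<in>UNIV. (x $ i) ^ (\<alpha> i))))"

definition poly_map_deg :: "nat \<Rightarrow> (real^'n \<Rightarrow> real^'m) \<Rightarrow> bool" where
  "poly_map_deg d p \<longleftrightarrow> (\<forall>j. poly_fun_deg d (\<lambda>x. p x $ j))"

definition alpha_const :: "nat \<Rightarrow> nat \<Rightarrow> real" where
  "alpha_const d m = real m powr (real d / 2) * real d ^ (2 * d) * real (d + 1)"

end

theory Submission
  imports Defs "HOL-Computational_Algebra.Polynomial"
begin

text \<open>Restricted to a ray \<open>t \<mapsto> t u\<close> with \<open>\<parallel>u\<parallel> = 1\<close>, the map \<open>p\<close> is a curve whose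
  components are univariate polynomials of degree at most \<open>d\<close>. Lagrange interpolation at the
  \<open>d + 1\<close> equispaced nodes \<open>-1 + 2k/d\<close> of \<open>[-1, 1]\<close> writes \<open>p (t u)\<close> as a combination of
  values of \<open>p\<close> on the unit ball, and each Lagrange basis polynomial is bounded on \<open>[-r, r]\<close> by
  \<open>((1 + r) d)\<^sup>d\<close>, since its \<open>d\<close> factors have numerators at most \<open>1 + r\<close> and denominators at
  least \<open>2/d\<close>. This gives the sharper constant \<open>(d + 1) d\<^sup>d\<close> in place of \<open>\<alpha>(d, m) n\<^sup>d\<close>.\<close>

definition lagrange_basis :: "('i \<Rightarrow> 'a) \<Rightarrow> 'i set \<Rightarrow> 'i \<Rightarrow> 'a \<Rightarrow> 'a::field" where
  "lagrange_basis x I k t = (\<Prod>i\<in>I - {k}. (t - x i) / (x k - x i))"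

lemma lagrange_basis_at_node:
  assumes "finite I" "inj_on x I" "k \<in> I" "j \<in> I"
  shows "lagrange_basis x I k (x j) = (if k = j then 1 else 0)"
proof (cases "k = j")
  case True
  have "x k \<noteq> x i" if "i \<in> I - {k}" for i
    using assms that by (auto dest: inj_onD)
  then show ?thesis
    using True by (simp add: lagrange_basis_def)
next
  case False
  then have "j \<in> I - {k}"
    using assms by auto
  then have "(\<Prod>i\<in>I - {k}. (x j - x i) / (x k - x i)) = 0"
    using assms(1) by (intro prod_zero bexI[of _ j]) auto
  then show ?thesis
    using False by (simp add: lagrange_basis_def)
qed

lemma poly_lagrange_interpolation:
  fixes q :: "'a::field poly" and x :: "'i \<Rightarrow> 'a"
  assumes "finite I" "inj_on x I" "degree q < card I"
  shows "poly q t = (\<Sum>k\<in>I. poly q (x k) * lagrange_basis x I k t)"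
proof -
  define L where "L k = (\<Prod>i\<in>I - {k}. [:- x i / (x k - x i), 1 / (x k - x i):])" for k
  have poly_L: "poly (L k) s = lagrange_basis x I k s" for k s
    unfolding L_def lagrange_basis_def poly_prod
    by (intro prod.cong refl) (simp add: diff_divide_distrib)
  have degree_L: "degree (L k) < card I" if "k \<in> I" for k
  proof -
    have "degree (L k) \<le> sum (degree \<circ> (\<lambda>i. [:- x i / (x k - x i), 1 / (x k - x i):])) (I - {k})"
      unfolding L_def using assms(1) by (intro degree_prod_sum_le) simp
    also have "\<dots> \<le> (\<Sum>i\<in>I - {k}. 1)"
      by (intro sum_mono) simp
    also have "\<dots> < card I"
      using assms(1) that card_gt_0_iff[of I] by auto
    finally show ?thesis .
  qed
  define Q where "Q = (\<Sum>k\<in>I. smult (poly q (x k)) (L k))"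
  have "q = Q"
  proof (rule poly_eqI_degree[where A = "x ` I"])
    fix s assume "s \<in> x ` I"
    then obtain j where j: "j \<in> I" "s = x j"
      by auto
    have "poly Q s = (\<Sum>k\<in>I. poly q (x k) * (if k = j then 1 else 0))"
      unfolding Q_def poly_sum using j assms(1,2)
      by (intro sum.cong refl) (simp add: poly_L lagrange_basis_at_node)
    also have "\<dots> = poly q s"
      using j assms(1) by (simp add: if_distrib cong: if_cong)
    finally show "poly q s = poly Q s" ..
  next
    have "card (x ` I) = card I"
      using assms(2) by (rule card_image)
    moreover have "degree Q < card I"
      unfolding Q_def using assms(3) degree_L
      by (intro degree_sum_less) (auto intro: le_less_trans[OF degree_smult_le])
    ultimately show "degree q < card (x ` I)" "degree Q < card (x ` I)"
      using assms(3) by simp_all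
  qed
  then have "poly q t = poly Q t"
    by simp
  also have "\<dots> = (\<Sum>k\<in>I. poly q (x k) * lagrange_basis x I k t)"
    unfolding Q_def poly_sum by (simp add: poly_L)
  finally show ?thesis .
qed

text \<open>For \<open>d = 0\<close> the single node is \<open>-1\<close>, since \<open>0 / 0 = 0\<close>.\<close>

definition equi_node :: "nat \<Rightarrow> nat \<Rightarrow> real" where
  "equi_node d k = -1 + 2 * real k / real d"

lemma abs_equi_node_le:
  assumes "k \<le> d"
  shows "\<bar>equi_node d k\<bar> \<le> 1"
proof (cases "d = 0")
  case False
  then have "2 * real k / real d \<le> 2"
    using assms by (simp add: divide_le_eq)
  moreover have "0 \<le> 2 * real k / real d"
    by simp
  ultimately show ?thesis
    unfolding equi_node_def by linarith
qed (simp add: equi_node_def)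

lemma inj_on_equi_node: "inj_on (equi_node d) {..d}"
  by (cases "d = 0") (auto simp: inj_on_def equi_node_def)

lemma abs_lagrange_basis_equi_node_le:
  assumes "k \<le> d"
  shows "\<bar>lagrange_basis (equi_node d) {..d} k t\<bar> \<le> ((1 + \<bar>t\<bar>) * real d) ^ d"
proof (cases "d = 0")
  case True
  then show ?thesis
    using assms by (simp add: lagrange_basis_def)
next
  case False
  have factor_le: "\<bar>(t - equi_node d i) / (equi_node d k - equi_node d i)\<bar> \<le> (1 + \<bar>t\<bar>) * real d"
    if "i \<in> {..d} - {k}" for i
  proof -
    have "equi_node d k - equi_node d i = 2 * (real k - real i) / real d"
      by (simp add: equi_node_def diff_divide_distrib)
    moreover have "1 \<le> \<bar>real k - real i\<bar>"
      using that by auto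
    ultimately have gap: "1 / real d \<le> \<bar>equi_node d k - equi_node d i\<bar>"
      using False by (simp add: abs_div divide_right_mono)
    have "\<bar>t - equi_node d i\<bar> \<le> 1 + \<bar>t\<bar>"
      using abs_equi_node_le[of i d] that by auto
    then have "\<bar>t - equi_node d i\<bar> / \<bar>equi_node d k - equi_node d i\<bar> \<le> (1 + \<bar>t\<bar>) / (1 / real d)"
      using gap False by (intro frac_le) auto
    then show ?thesis
      by (simp add: abs_div)
  qed
  have "1 \<le> (1 + \<bar>t\<bar>) * real d"
    using False by (intro mult_ge1_I) auto
  have "\<bar>lagrange_basis (equi_node d) {..d} k t\<bar>
          = (\<Prod>i\<in>{..d} - {k}. \<bar>(t - equi_node d i) / (equi_node d k - equi_node d i)\<bar>)"
    by (simp add: lagrange_basis_def abs_prod)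
  also have "\<dots> \<le> ((1 + \<bar>t\<bar>) * real d) ^ d"
    using factor_le assms \<open>1 \<le> (1 + \<bar>t\<bar>) * real d\<close>
    by (intro prod_le_power) (auto simp: card_Diff_singleton)
  finally show ?thesis .
qed

lemma norm_poly_curve_le:
  fixes f :: "real \<Rightarrow> 'a::euclidean_space"
  assumes poly_f: "\<And>b. b \<in> Basis \<Longrightarrow> \<exists>P. degree P \<le> d \<and> (\<forall>s. f s \<bullet> b = poly P s)"
    and bound: "\<And>s. \<bar>s\<bar> \<le> 1 \<Longrightarrow> norm (f s) \<le> M"
  shows "norm (f t) \<le> real (d + 1) * ((1 + \<bar>t\<bar>) * real d) ^ d * M"
proof -
  let ?L = "\<lambda>k. lagrange_basis (equi_node d) {..d} k t"
  have "f t = (\<Sum>k\<le>d. ?L k *\<^sub>R f (equi_node d k))"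
  proof (rule euclidean_eqI)
    fix b :: 'a assume "b \<in> Basis"
    then obtain P where "degree P \<le> d" and P: "\<And>s. f s \<bullet> b = poly P s"
      using poly_f by blast
    then have "poly P t = (\<Sum>k\<le>d. poly P (equi_node d k) * ?L k)"
      by (intro poly_lagrange_interpolation inj_on_equi_node) auto
    then show "f t \<bullet> b = (\<Sum>k\<le>d. ?L k *\<^sub>R f (equi_node d k)) \<bullet> b"
      by (simp add: P inner_sum_left mult.commute)
  qed
  also have "norm \<dots> \<le> (\<Sum>k\<le>d. norm (?L k *\<^sub>R f (equi_node d k)))"
    by (rule norm_sum)
  also have "\<dots> \<le> (\<Sum>k\<le>d. ((1 + \<bar>t\<bar>) * real d) ^ d * M)"
  proof (rule sum_mono)
    fix k assume "k \<in> {..d}"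
    then have "\<bar>?L k\<bar> \<le> ((1 + \<bar>t\<bar>) * real d) ^ d" and "norm (f (equi_node d k)) \<le> M"
      by (simp_all add: abs_lagrange_basis_equi_node_le bound abs_equi_node_le)
    then show "norm (?L k *\<^sub>R f (equi_node d k)) \<le> ((1 + \<bar>t\<bar>) * real d) ^ d * M"
      by (simp add: mult_mono')
  qed
  also have "\<dots> = real (d + 1) * ((1 + \<bar>t\<bar>) * real d) ^ d * M"
    by simp
  finally show ?thesis .
qed

lemma finite_multidegrees_le: "finite {\<alpha>::'n::finite \<Rightarrow> nat. sum \<alpha> UNIV \<le> d}"
proof (rule finite_subset)
  show "{\<alpha>::'n \<Rightarrow> nat. sum \<alpha> UNIV \<le> d} \<subseteq> PiE UNIV (\<lambda>_. {..d})"
  proof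
    fix \<alpha> :: "'n \<Rightarrow> nat" assume "\<alpha> \<in> {\<alpha>. sum \<alpha> UNIV \<le> d}"
    then have "\<alpha> i \<le> d" for i
      using member_le_sum[of i UNIV \<alpha>] by auto
    then show "\<alpha> \<in> PiE UNIV (\<lambda>_. {..d})"
      by auto
  qed
qed (simp add: finite_PiE)

lemma poly_fun_deg_along_line:
  assumes "poly_fun_deg d f"
  shows "\<exists>P. degree P \<le> d \<and> (\<forall>t. f (t *\<^sub>R u) = poly P t)"
proof -
  obtain c where c: "\<And>x. f x = (\<Sum>\<alpha>\<in>{\<alpha>. sum \<alpha> UNIV \<le> d}. c \<alpha> * (\<Prod>i\<in>UNIV. (x $ i) ^ \<alpha> i))"
    using assms unfolding poly_fun_deg_def by blast
  define P where "P = (\<Sum>\<alpha>\<in>{\<alpha>. sum \<alpha> UNIV \<le> d}. monom (c \<alpha> * (\<Prod>i\<in>UNIV. (u $ i) ^ \<alpha> i)) (sum \<alpha> UNIV))"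
  have "degree P \<le> d"
    unfolding P_def
    by (intro degree_sum_le finite_multidegrees_le) (auto intro: order.trans[OF degree_monom_le])
  moreover have "f (t *\<^sub>R u) = poly P t" for t
    unfolding c P_def poly_sum poly_monom
    by (intro sum.cong refl) (simp add: power_mult_distrib prod.distrib power_sum)
  ultimately show ?thesis
    by blast
qed

lemma continuous_on_poly_fun_deg:
  assumes "poly_fun_deg d f"
  shows "continuous_on S f"
proof -
  obtain c where "\<And>x. f x = (\<Sum>\<alpha>\<in>{\<alpha>. sum \<alpha> UNIV \<le> d}. c \<alpha> * (\<Prod>i\<in>UNIV. (x $ i) ^ \<alpha> i))"
    using assms unfolding poly_fun_deg_def by blast
  then have "f = (\<lambda>x. \<Sum>\<alpha>\<in>{\<alpha>. sum \<alpha> UNIV \<le> d}. c \<alpha> * (\<Prod>i\<in>UNIV. (x $ i) ^ \<alpha> i))"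
    by auto
  then show ?thesis
    by (simp add: continuous_intros)
qed

lemma continuous_on_poly_map_deg:
  assumes "poly_map_deg d p"
  shows "continuous_on S p"
proof -
  have "continuous_on S (\<lambda>x. \<chi> j. p x $ j)"
    using assms unfolding poly_map_deg_def
    by (intro continuous_on_vec_lambda continuous_on_poly_fun_deg) blast
  then show ?thesis
    by simp
qed

lemma norm_poly_map_le_on_cball:
  assumes "poly_map_deg d p"
    and bound: "\<And>y. y \<in> cball 0 1 \<Longrightarrow> norm (p y) \<le> M"
    and "x \<in> cball 0 r"
  shows "norm (p x) \<le> real (d + 1) * ((1 + r) * real d) ^ d * M"
proof -
  let ?u = "sgn x"
  have "\<exists>P. degree P \<le> d \<and> (\<forall>s. p (s *\<^sub>R ?u) \<bullet> b = poly P s)" if "b \<in> Basis" for b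
  proof -
    obtain j where "b = axis j 1"
      using \<open>b \<in> Basis\<close> by (auto simp: Basis_vec_def)
    then show ?thesis
      using assms(1) poly_fun_deg_along_line[of d "\<lambda>x. p x $ j" ?u]
      by (simp add: poly_map_deg_def inner_axis)
  qed
  moreover have "norm (p (s *\<^sub>R ?u)) \<le> M" if "\<bar>s\<bar> \<le> 1" for s
    using that by (intro bound) (simp add: norm_sgn mult_le_one)
  ultimately have "norm (p (norm x *\<^sub>R ?u)) \<le> real (d + 1) * ((1 + \<bar>norm x\<bar>) * real d) ^ d * M"
    by (rule norm_poly_curve_le)
  also have "\<dots> \<le> real (d + 1) * ((1 + r) * real d) ^ d * M"
  proof -
    have "((1 + \<bar>norm x\<bar>) * real d) ^ d \<le> ((1 + r) * real d) ^ d"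
      using assms(3) by (intro power_mono mult_right_mono) auto
    moreover have "M \<ge> 0"
      using order.trans[OF norm_ge_zero bound[of 0]] by simp
    ultimately show ?thesis
      by (intro mult_right_mono mult_left_mono) auto
  qed
  finally show ?thesis
    by (cases "x = 0") (simp_all add: sgn_div_norm)
qed

lemma interpolation_constant_le_alpha_const:
  assumes "r \<ge> 0" "m \<ge> 1" "n \<ge> 1"
  shows "real (d + 1) * ((1 + r) * real d) ^ d \<le> alpha_const d m * real n ^ d * (1 + r) ^ d"
proof -
  let ?K = "real (d + 1) * ((1 + r) ^ d * real d ^ (2 * d))"
  have "real d ^ d \<le> real d ^ (2 * d)"
    by (cases "d = 0") (auto intro: power_increasing)
  then have "real (d + 1) * ((1 + r) * real d) ^ d \<le> ?K"
    unfolding power_mult_distrib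
    using assms(1) by (intro mult_left_mono) auto
  also have "\<dots> \<le> (real m powr (real d / 2) * real n ^ d) * ?K"
  proof -
    have "1 \<le> real m powr (real d / 2) * real n ^ d"
      using assms by (intro mult_ge1_I one_le_power ge_one_powr_ge_zero) auto
    moreover have "0 \<le> ?K"
      using assms(1) by simp
    ultimately show ?thesis
      using mult_right_mono by fastforce
  qed
  also have "\<dots> = alpha_const d m * real n ^ d * (1 + r) ^ d"
    by (simp add: alpha_const_def mult_ac)
  finally show ?thesis .
qed

theorem lemma4p17:
  fixes p :: "real^'n \<Rightarrow> real^'m" and d :: nat and r :: real
  assumes "poly_map_deg d p" and "r > 0"
  shows "(SUP x\<in>cball 0 r. norm (p x))
           \<le> alpha_const d CARD('m) * real CARD('n) ^ d * (1 + r) ^ d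
              * (SUP x\<in>cball 0 1. norm (p x))"
proof -
  define M where "M = (SUP x\<in>cball 0 1. norm (p x))"
  have "compact (p ` cball 0 1)"
    using assms(1) by (intro compact_continuous_image continuous_on_poly_map_deg) auto
  then have "bdd_above ((\<lambda>x. norm (p x)) ` cball 0 1)"
    by (auto dest!: compact_imp_bounded simp: bounded_iff bdd_above_def)
  then have bound: "norm (p y) \<le> M" if "y \<in> cball 0 1" for y
    unfolding M_def using that by (rule cSUP_upper2) simp
  then have "M \<ge> 0"
    using norm_ge_zero order.trans by (metis centre_in_cball zero_le_one)
  have "(SUP x\<in>cball 0 r. norm (p x)) \<le> real (d + 1) * ((1 + r) * real d) ^ d * M"
    using assms bound by (intro cSUP_least norm_poly_map_le_on_cball) auto
  also have "\<dots> \<le> alpha_const d CARD('m) * real CARD('n) ^ d * (1 + r) ^ d * M"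
    using \<open>M \<ge> 0\<close> assms(2)
    by (intro mult_right_mono interpolation_constant_le_alpha_const) auto
  finally show ?thesis
    unfolding M_def .
qed

end
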